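(* Let $V$ be a real vector space of dimension $m\ge3$ with a positive definite inner product, and let $R\neq0$ be a Jacobi-Tsankov algebraic curvature tensor on $V$ such that $r(x)<m-1$ for all $x\in V$. Let $x\in S(V)$ with $r(x)\neq0$, and set $W(x)=\mathbb{R}x\oplus\operatorname{Range}(J(x))$. If $w$ is a unit vector in $W(x)$, then: \begin{enumerate} \item $\operatorname{Range}(J(w))\subset W(x)$ and $J(w)$ vanishes on $W(x)^\perp$; \item $J(w)$ is similar to $J(x)$; \item $J(x)$ has exactly two eigenvalues. \end{enumerate}
   Context: An algebraic curvature tensor is $R\in\otimes^4V^*$ satisfying $R(x,y,z,w)=R(z,w,x,y)=-R(y,x,z,w)$ and $R(x,y,z,w)+R(y,z,x,w)+R(z,x,y,w)=0$. The curvature operator $\mathcal{R}(x,y)$ is defined by $\langle\mathcal{R}(x,y)z,w\rangle=R(x,y,z,w)$; the Jacobi operator is $J(x):y\mapsto\mathcal{R}(y,x)x$, and $r(x)=\operatorname{Rank}J(x)$. $S(V)$ is the unit sphere of $V$. $R$ is Jacobi-Tsankov if $x\perp y$ implies $J(x)J(y)=J(y)J(x)$. *)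

theory Defs
  imports "HOL-Analysis.Analysis"
begin

definition alg_curv_tensor :: "('a::euclidean_space \<Rightarrow> 'a \<Rightarrow> 'a \<Rightarrow> 'a \<Rightarrow> real) \<Rightarrow> bool" where
  "alg_curv_tensor R \<longleftrightarrow>
     (\<forall>y z w. linear (\<lambda>x. R x y z w)) \<and>
     (\<forall>x z w. linear (\<lambda>y. R x y z w)) \<and>
     (\<forall>x y w. linear (\<lambda>z. R x y z w)) \<and>
     (\<forall>x y z. linear (\<lambda>w. R x y z w)) \<and>
     (\<forall>x y z w. R x y z w = R z w x y) \<and>
     (\<forall>x y z w. R x y z w = - R y x z w) \<and>
     (\<forall>x y z w. R x y z w + R y z x w + R z x y w = 0)"

text \<open>Curvature operator: the unique vector with inner product R(x,y,z,.) (Riesz).\<close>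
definition curv_op :: "('a::euclidean_space \<Rightarrow> 'a \<Rightarrow> 'a \<Rightarrow> 'a \<Rightarrow> real) \<Rightarrow> 'a \<Rightarrow> 'a \<Rightarrow> 'a \<Rightarrow> 'a" where
  "curv_op R x y z = (\<Sum>b\<in>Basis. R x y z b *\<^sub>R b)"

definition jacobi_op :: "('a::euclidean_space \<Rightarrow> 'a \<Rightarrow> 'a \<Rightarrow> 'a \<Rightarrow> real) \<Rightarrow> 'a \<Rightarrow> 'a \<Rightarrow> 'a" where
  "jacobi_op R x = (\<lambda>y. curv_op R y x x)"

definition jrank :: "('a::euclidean_space \<Rightarrow> 'a \<Rightarrow> 'a \<Rightarrow> 'a \<Rightarrow> real) \<Rightarrow> 'a \<Rightarrow> nat" where
  "jrank R x = dim (range (jacobi_op R x))"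

definition jacobi_tsankov :: "('a::euclidean_space \<Rightarrow> 'a \<Rightarrow> 'a \<Rightarrow> 'a \<Rightarrow> real) \<Rightarrow> bool" where
  "jacobi_tsankov R \<longleftrightarrow>
     (\<forall>x y. x \<bullet> y = 0 \<longrightarrow> jacobi_op R x \<circ> jacobi_op R y = jacobi_op R y \<circ> jacobi_op R x)"

definition Wsp :: "('a::euclidean_space \<Rightarrow> 'a \<Rightarrow> 'a \<Rightarrow> 'a \<Rightarrow> real) \<Rightarrow> 'a \<Rightarrow> 'a set" where
  "Wsp R x = span (insert x (range (jacobi_op R x)))"

definition similar_op :: "('a::euclidean_space \<Rightarrow> 'a) \<Rightarrow> ('a \<Rightarrow> 'a) \<Rightarrow> bool" where
  "similar_op A B \<longleftrightarrow> (\<exists>T. linear T \<and> bij T \<and> A \<circ> T = T \<circ> B)"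

definition eigenvalues_op :: "('a::euclidean_space \<Rightarrow> 'a) \<Rightarrow> real set" where
  "eigenvalues_op A = {c. \<exists>v. v \<noteq> 0 \<and> A v = c *\<^sub>R v}"

end

theory Submission
  imports Defs
begin

(* For orthonormal p, q, z, the Jacobi-Tsankov identity applied to the orthogonal pairs
   (p + q, p - q) and (q, p +- z) shows: J(p) q = l q forces J(q) p = l p, and J(q) acts as l on
   every eigenvector of J(p) orthogonal to q with nonzero eigenvalue.  Hence for unit p, J(p) has
   at most one nonzero eigenvalue, i.e. J(x) = l P with P the orthogonal projection onto
   Range J(x).
   Write a unit w in W(x) as w = a x + b e with e a unit vector in Range J(x), and put
   w' = -b x + a e.  Then J(w) + J(w') = J(x) + J(e), and J(w), J(w') are again l times
   orthogonal projections, so J(w) agrees with J(x) wherever J(x) + J(e) is 0 or 2 l; this is the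
   case on the orthogonal complement of {x, e}.  Therefore the rotation of the plane span {x, e}
   taking x to w conjugates J(x) into J(w) and preserves W(x). *)

section \<open>Self-adjoint operators\<close>

lemma zero_if_linear_le_quadratic:
  fixes g K :: real
  assumes "\<And>t. 2 * t * g \<le> t\<^sup>2 * K"
  shows "g = 0"
proof (rule ccontr)
  assume "g \<noteq> 0"
  then have "g\<^sup>2 > 0" by simp
  define c where "c = \<bar>K\<bar> + 1"
  have "c > 0" "K < c" by (auto simp: c_def)
  have "2 * (g / c) * g * c\<^sup>2 \<le> (g / c)\<^sup>2 * K * c\<^sup>2"
    using assms[of "g / c"] by (intro mult_right_mono) simp_all
  then have "2 * c * g\<^sup>2 \<le> K * g\<^sup>2"
    using \<open>c > 0\<close> by (simp add: power2_eq_square algebra_simps)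
  then have "2 * c \<le> K" using \<open>g\<^sup>2 > 0\<close> by simp
  then show False using \<open>c > 0\<close> \<open>K < c\<close> by simp
qed

lemma selfadjoint_kernel_range_eq_0:
  fixes A :: "'a::real_inner \<Rightarrow> 'a"
  assumes "\<And>u v. A u \<bullet> v = u \<bullet> A v" and "v \<in> range A" and "A v = 0"
  shows "v = 0"
proof -
  obtain y where "v = A y" using assms(2) by blast
  then have "v \<bullet> v = y \<bullet> A v" using assms(1)[of y v] by simp
  then show ?thesis using assms(3) by simp
qed

lemma selfadjoint_max_quadratic_form_orthogonal:
  fixes A :: "'a::real_inner \<Rightarrow> 'a"
  assumes lin: "linear A" and sym: "\<And>u v. A u \<bullet> v = u \<bullet> A v" and S: "subspace S"
    and "v \<in> S" "norm v = 1"
    and max: "\<And>y. y \<in> S \<Longrightarrow> norm y = 1 \<Longrightarrow> A y \<bullet> y \<le> A v \<bullet> v"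
    and "u \<in> S" "u \<bullet> v = 0"
  shows "A v \<bullet> u = 0"
proof -
  define M where "M = A v \<bullet> v"
  have bound: "A y \<bullet> y \<le> M * (y \<bullet> y)" if "y \<in> S" for y
  proof (cases "y = 0")
    case False
    have "(1 / norm y) *\<^sub>R y \<in> S" using S \<open>y \<in> S\<close> by (simp add: subspace_scale)
    from max[OF this] have "(A y \<bullet> y) / (norm y)\<^sup>2 \<le> M"
      using False by (simp add: M_def linear_scale[OF lin] power2_eq_square)
    then show ?thesis using False by (simp add: divide_le_eq power2_norm_eq_inner)
  qed (simp add: linear_0[OF lin])
  have "2 * t * (A v \<bullet> u) \<le> t\<^sup>2 * (M * (u \<bullet> u) - A u \<bullet> u)" for t
  proof -
    have "v + t *\<^sub>R u \<in> S" using S \<open>v \<in> S\<close> \<open>u \<in> S\<close> by (simp add: subspace_add subspace_scale)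
    from bound[OF this]
    have "A (v + t *\<^sub>R u) \<bullet> (v + t *\<^sub>R u) \<le> M * ((v + t *\<^sub>R u) \<bullet> (v + t *\<^sub>R u))" .
    moreover have "(v + t *\<^sub>R u) \<bullet> (v + t *\<^sub>R u) = 1 + t\<^sup>2 * (u \<bullet> u)"
      using \<open>norm v = 1\<close> \<open>u \<bullet> v = 0\<close>
      by (simp add: inner_add_left inner_add_right inner_commute[of v u] power2_eq_square norm_eq_1)
    moreover have "A (v + t *\<^sub>R u) \<bullet> (v + t *\<^sub>R u) = M + 2 * t * (A v \<bullet> u) + t\<^sup>2 * (A u \<bullet> u)"
      using sym[of u v]
      by (simp add: M_def linear_add[OF lin] linear_scale[OF lin] inner_add_left inner_add_right
          inner_commute[of v "A u"] inner_commute[of u "A v"] power2_eq_square algebra_simps)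
    ultimately have "M + 2 * t * (A v \<bullet> u) + t\<^sup>2 * (A u \<bullet> u) \<le> M * (1 + t\<^sup>2 * (u \<bullet> u))"
      by (simp only:)
    then show ?thesis by (simp add: algebra_simps)
  qed
  then show ?thesis by (rule zero_if_linear_le_quadratic)
qed

lemma selfadjoint_invariant_subspace_has_eigenvector:
  fixes A :: "'a::euclidean_space \<Rightarrow> 'a"
  assumes lin: "linear A" and sym: "\<And>u v. A u \<bullet> v = u \<bullet> A v"
    and S: "subspace S" and inv: "\<And>u. u \<in> S \<Longrightarrow> A u \<in> S"
    and "u0 \<in> S" "u0 \<noteq> 0"
  obtains v c where "v \<in> S" "v \<noteq> 0" "A v = c *\<^sub>R v"
proof -
  define K where "K = S \<inter> sphere 0 1"
  have "compact K" unfolding K_def by (intro closed_Int_compact closed_subspace S compact_sphere)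
  moreover have "(1 / norm u0) *\<^sub>R u0 \<in> K"
    unfolding K_def using assms(5,6) S by (simp add: subspace_scale)
  moreover have "continuous_on K (\<lambda>u. A u \<bullet> u)"
    using lin
    by (intro continuous_intros linear_continuous_on) (simp add: linear_conv_bounded_linear)
  ultimately obtain v where "v \<in> K"
    and vmax: "\<And>y. y \<in> K \<Longrightarrow> A y \<bullet> y \<le> A v \<bullet> v"
    using continuous_attains_sup[of K] by blast
  then have "v \<in> S" "norm v = 1" by (auto simp: K_def)
  define u where "u = A v - (A v \<bullet> v) *\<^sub>R v"
  have "u \<in> S" unfolding u_def using \<open>v \<in> S\<close> inv S by (simp add: subspace_diff subspace_scale)
  moreover have uv: "u \<bullet> v = 0" using \<open>norm v = 1\<close> by (simp add: u_def inner_diff_left norm_eq_1)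
  ultimately have "A v \<bullet> u = 0"
    using vmax \<open>v \<in> S\<close> \<open>norm v = 1\<close>
    by (intro selfadjoint_max_quadratic_form_orthogonal[OF lin sym S]) (auto simp: K_def)
  then have "u \<bullet> u = 0" using uv by (simp add: u_def inner_diff_left inner_commute)
  then have "A v = (A v \<bullet> v) *\<^sub>R v" by (simp add: u_def)
  then show ?thesis using that \<open>v \<in> S\<close> \<open>norm v = 1\<close> by fastforce
qed

lemma selfadjoint_has_nonzero_eigenvalue:
  fixes A :: "'a::euclidean_space \<Rightarrow> 'a"
  assumes lin: "linear A" and sym: "\<And>u v. A u \<bullet> v = u \<bullet> A v" and "A u0 \<noteq> 0"
  obtains v c where "v \<noteq> 0" "c \<noteq> 0" "A v = c *\<^sub>R v"
proof -
  have "subspace (range A)" by (rule linear_subspace_image[OF lin subspace_UNIV])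
  moreover have "\<And>u. u \<in> range A \<Longrightarrow> A u \<in> range A" by simp
  ultimately obtain v c where "v \<in> range A" "v \<noteq> 0" "A v = c *\<^sub>R v"
    by (rule selfadjoint_invariant_subspace_has_eigenvector[OF lin sym _ _
          rangeI[of A u0] assms(3)])
  moreover have "c \<noteq> 0"
  proof
    assume "c = 0"
    then have "A v = 0" using \<open>A v = c *\<^sub>R v\<close> by simp
    then show False
      using selfadjoint_kernel_range_eq_0[OF sym \<open>v \<in> range A\<close>] \<open>v \<noteq> 0\<close> by simp
  qed
  ultimately show ?thesis using that by blast
qed

lemma scaled_projection_inner_self:
  fixes P :: "'a::real_inner \<Rightarrow> 'a"
  assumes "\<And>u v. P u \<bullet> v = u \<bullet> P v" and "\<And>u. P (P u) = l *\<^sub>R P u"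
  shows "P u \<bullet> P u = l * (u \<bullet> P u)"
  using assms(1)[of u "P u"] assms(2)[of u] by simp

lemma scaled_projection_sum_eq_0:
  fixes P Q :: "'a::real_inner \<Rightarrow> 'a"
  assumes "\<And>u v. P u \<bullet> v = u \<bullet> P v" "\<And>u. P (P u) = l *\<^sub>R P u"
    and "\<And>u v. Q u \<bullet> v = u \<bullet> Q v" "\<And>u. Q (Q u) = l *\<^sub>R Q u"
    and "P u + Q u = 0"
  shows "P u = 0"
proof -
  have "P u \<bullet> P u + Q u \<bullet> Q u = l * (u \<bullet> (P u + Q u))"
    using scaled_projection_inner_self[OF assms(1,2)] scaled_projection_inner_self[OF assms(3,4)]
    by (simp add: inner_add_right algebra_simps)
  then have "P u \<bullet> P u + Q u \<bullet> Q u = 0" using assms(5) by simp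
  moreover have "P u \<bullet> P u \<ge> 0" "Q u \<bullet> Q u \<ge> 0" by simp_all
  ultimately show ?thesis by (simp add: add_nonneg_eq_0_iff)
qed

lemma scaled_projection_sum_eq_double:
  fixes P Q :: "'a::real_inner \<Rightarrow> 'a"
  assumes "\<And>u v. P u \<bullet> v = u \<bullet> P v" "\<And>u. P (P u) = l *\<^sub>R P u"
    and "\<And>u v. Q u \<bullet> v = u \<bullet> Q v" "\<And>u. Q (Q u) = l *\<^sub>R Q u"
    and sum: "P u + Q u = (2 * l) *\<^sub>R u"
  shows "P u = l *\<^sub>R u"
proof -
  have squares: "P u \<bullet> P u + Q u \<bullet> Q u = l * (u \<bullet> (P u + Q u))"
    using scaled_projection_inner_self[OF assms(1,2)] scaled_projection_inner_self[OF assms(3,4)]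
    by (simp add: inner_add_right algebra_simps)
  have "(P u + Q u) \<bullet> (P u + Q u) + (P u - Q u) \<bullet> (P u - Q u) = 2 * (P u \<bullet> P u + Q u \<bullet> Q u)"
    by (simp add: inner_add_left inner_add_right inner_diff_left inner_diff_right inner_commute)
  then have "(P u - Q u) \<bullet> (P u - Q u) = 0"
    using squares sum by (simp add: power2_eq_square algebra_simps)
  then have "P u = Q u" by simp
  then have "2 *\<^sub>R P u = 2 *\<^sub>R (l *\<^sub>R u)" using sum by (simp add: scaleR_2)
  then show ?thesis by (simp only: scaleR_cancel_left) simp
qed

section \<open>Plane rotations\<close>

text \<open>For orthonormal \<open>x\<close>, \<open>e\<close> and \<open>a\<^sup>2 + b\<^sup>2 = 1\<close>: the rotation of the plane
  \<open>span {x, e}\<close> taking \<open>x\<close> to \<open>a x + b e\<close>, extended by the identity on its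
  orthogonal complement.\<close>
definition plane_rotation :: "'a::real_inner \<Rightarrow> 'a \<Rightarrow> real \<Rightarrow> real \<Rightarrow> 'a \<Rightarrow> 'a" where
  "plane_rotation x e a b u =
     u + (a - 1) *\<^sub>R ((u \<bullet> x) *\<^sub>R x + (u \<bullet> e) *\<^sub>R e) + b *\<^sub>R ((u \<bullet> x) *\<^sub>R e - (u \<bullet> e) *\<^sub>R x)"

lemma linear_plane_rotation: "linear (plane_rotation x e a b)"
  by (rule linearI) (simp_all add: plane_rotation_def inner_add_left algebra_simps)

lemma plane_rotation_in_subspace:
  assumes "subspace S" "x \<in> S" "e \<in> S" "u \<in> S"
  shows "plane_rotation x e a b u \<in> S"
  unfolding plane_rotation_def using assms
  by (intro subspace_add subspace_scale subspace_diff) auto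

lemma plane_rotation_orthogonal:
  "z \<bullet> x = 0 \<Longrightarrow> z \<bullet> e = 0 \<Longrightarrow> plane_rotation x e a b z = z"
  by (simp add: plane_rotation_def)

context
  fixes x e :: "'a::real_inner"
  assumes orthonormal: "x \<bullet> x = 1" "e \<bullet> e = 1" "x \<bullet> e = 0"
begin

lemma plane_rotation_first: "plane_rotation x e a b x = a *\<^sub>R x + b *\<^sub>R e"
  using orthonormal by (simp add: plane_rotation_def algebra_simps)

lemma plane_rotation_second: "plane_rotation x e a b e = (- b) *\<^sub>R x + a *\<^sub>R e"
  using orthonormal by (simp add: plane_rotation_def inner_commute algebra_simps)

lemma inj_plane_rotation:
  assumes "a\<^sup>2 + b\<^sup>2 = 1"
  shows "inj (plane_rotation x e a b)"
proof (rule linear_injective_0[OF linear_plane_rotation, THEN iffD2], intro allI impI)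
  fix u
  let ?T = "plane_rotation x e a b"
  assume "?T u = 0"
  then have "?T u \<bullet> x = 0" "?T u \<bullet> e = 0" by simp_all
  then have h1: "a * (u \<bullet> x) - b * (u \<bullet> e) = 0" and h2: "a * (u \<bullet> e) + b * (u \<bullet> x) = 0"
    using orthonormal
    by (simp_all add: plane_rotation_def inner_add_left inner_diff_left inner_commute algebra_simps)
  have "(a\<^sup>2 + b\<^sup>2) * (u \<bullet> x)
      = a * (a * (u \<bullet> x) - b * (u \<bullet> e)) + b * (a * (u \<bullet> e) + b * (u \<bullet> x))"
    by (simp add: algebra_simps power2_eq_square)
  then have "u \<bullet> x = 0" using h1 h2 assms by simp
  moreover have "(a\<^sup>2 + b\<^sup>2) * (u \<bullet> e)
      = a * (a * (u \<bullet> e) + b * (u \<bullet> x)) - b * (a * (u \<bullet> x) - b * (u \<bullet> e))"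
    by (simp add: algebra_simps power2_eq_square)
  then have "u \<bullet> e = 0" using h1 h2 assms by simp
  ultimately show "u = 0" using \<open>?T u = 0\<close> plane_rotation_orthogonal[of u x e a b] by simp
qed

end

lemma bij_plane_rotation:
  fixes x e :: "'a::euclidean_space"
  assumes "x \<bullet> x = 1" "e \<bullet> e = 1" "x \<bullet> e = 0" "a\<^sup>2 + b\<^sup>2 = 1"
  shows "bij (plane_rotation x e a b)"
  using inj_plane_rotation[OF assms] linear_inj_imp_surj[OF linear_plane_rotation]
  by (simp add: bij_def)

section \<open>Algebraic curvature tensors\<close>

lemma subspace_Wsp: "subspace (Wsp R x)"
  by (simp add: Wsp_def subspace_span)

lemma base_in_Wsp: "x \<in> Wsp R x"
  by (simp add: Wsp_def span_base)

lemma range_jacobi_op_subset_Wsp: "range (jacobi_op R x) \<subseteq> Wsp R x"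
  by (auto simp: Wsp_def intro: span_base)

locale curvature_tensor =
  fixes R :: "'a::euclidean_space \<Rightarrow> 'a \<Rightarrow> 'a \<Rightarrow> 'a \<Rightarrow> real"
  assumes alg_curv_tensor_R: "alg_curv_tensor R"
begin

lemma R_linear:
  "linear (\<lambda>x. R x y z w)" "linear (\<lambda>y. R x y z w)"
  "linear (\<lambda>z. R x y z w)" "linear (\<lambda>w. R x y z w)"
  using alg_curv_tensor_R unfolding alg_curv_tensor_def by - (elim conjE allE, assumption)+

lemmas R_multilinear =
  linear_add[OF R_linear(1)] linear_add[OF R_linear(2)]
  linear_add[OF R_linear(3)] linear_add[OF R_linear(4)]
  linear_diff[OF R_linear(1)] linear_diff[OF R_linear(2)]
  linear_diff[OF R_linear(3)] linear_diff[OF R_linear(4)]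
  linear_scale[OF R_linear(1)] linear_scale[OF R_linear(2)]
  linear_scale[OF R_linear(3)] linear_scale[OF R_linear(4)]
  linear_0[OF R_linear(1)] linear_0[OF R_linear(2)]
  linear_0[OF R_linear(3)] linear_0[OF R_linear(4)]

lemma R_pair_sym: "R x y z w = R z w x y"
  and R_antisym: "R x y z w = - R y x z w"
  using alg_curv_tensor_R unfolding alg_curv_tensor_def by - (elim conjE allE, assumption)+

lemma R_antisym2: "R x y z w = - R x y w z"
  by (metis R_pair_sym R_antisym)

lemma R_same: "R x x z w = 0"
  using R_antisym[of x x z w] by simp

lemma R_swap: "R u p q v = R v q p u"
  by (metis R_pair_sym R_antisym R_antisym2 minus_minus)

lemma curv_op_inner: "curv_op R a b c \<bullet> d = R a b c d"
proof -
  have "curv_op R a b c \<bullet> d = (\<Sum>e\<in>Basis. R a b c e * (e \<bullet> d))"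
    unfolding curv_op_def by (simp add: inner_sum_left)
  also have "\<dots> = R a b c (\<Sum>e\<in>Basis. (d \<bullet> e) *\<^sub>R e)"
    by (simp add: linear_sum[OF R_linear(4)] R_multilinear inner_commute mult.commute)
  also have "\<dots> = R a b c d" by (simp add: euclidean_representation)
  finally show ?thesis .
qed

abbreviation J where "J \<equiv> jacobi_op R"

lemma J_inner: "J p u \<bullet> d = R u p p d"
  by (simp add: jacobi_op_def curv_op_inner)

lemma J_selfadjoint: "J p u \<bullet> v = u \<bullet> J p v"
  by (simp add: J_inner inner_commute[of u] R_swap[of u p p v])

lemma J_self: "J p p = 0"
  by (rule vector_eq_rdot[THEN iffD1]) (simp add: J_inner R_same)

lemma linear_J: "linear (J p)"
  by (rule linearI; rule vector_eq_rdot[THEN iffD1])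
    (simp_all add: J_inner inner_add_left R_multilinear)

lemmas J_linear = linear_add[OF linear_J] linear_diff[OF linear_J] linear_scale[OF linear_J]
  linear_0[OF linear_J] linear_neg[OF linear_J]

lemma J_eigenvector_orthogonal:
  assumes "J p q = l *\<^sub>R q" "l \<noteq> 0"
  shows "q \<bullet> p = 0"
proof -
  have "l * (q \<bullet> p) = q \<bullet> J p p" using assms(1) J_selfadjoint[of p q p] by simp
  then show ?thesis using assms(2) by (simp add: J_self)
qed

text \<open>Twice the polarized Jacobi operator \<open>J(p,q)\<close>.\<close>
definition polar_J :: "'a \<Rightarrow> 'a \<Rightarrow> 'a \<Rightarrow> 'a" where
  "polar_J p q u = curv_op R u p q + curv_op R u q p"

lemma polar_J_inner: "polar_J p q u \<bullet> d = R u p q d + R u q p d"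
  by (simp add: polar_J_def inner_add_left curv_op_inner)

lemma polar_J_selfadjoint: "polar_J p q u \<bullet> v = u \<bullet> polar_J p q v"
  by (simp add: polar_J_inner inner_commute[of u] R_swap[of u p q v] R_swap[of u q p v])

lemma linear_polar_J: "linear (polar_J p q)"
  by (rule linearI; rule vector_eq_rdot[THEN iffD1])
    (simp_all add: polar_J_inner inner_add_left R_multilinear algebra_simps)

lemmas polar_J_linear = linear_add[OF linear_polar_J] linear_diff[OF linear_polar_J]
  linear_scale[OF linear_polar_J] linear_neg[OF linear_polar_J]

lemma polar_J_first: "polar_J p q p = - J p q"
  by (rule vector_eq_rdot[THEN iffD1]) (simp add: J_inner polar_J_inner R_same R_antisym[of p q p])

lemma polar_J_second: "polar_J p q q = - J q p"
  by (rule vector_eq_rdot[THEN iffD1]) (simp add: J_inner polar_J_inner R_same R_antisym[of q p q])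

lemma J_add_polar: "J (p + q) u = J p u + J q u + polar_J p q u"
  by (rule vector_eq_rdot[THEN iffD1])
    (simp add: J_inner polar_J_inner inner_add_left R_multilinear)

lemma J_diff_polar: "J (p - q) u = J p u + J q u - polar_J p q u"
  by (rule vector_eq_rdot[THEN iffD1])
    (simp add: J_inner polar_J_inner inner_add_left inner_diff_left R_multilinear)

lemma J_linear_combination:
  "J (a *\<^sub>R p + b *\<^sub>R q) u = a\<^sup>2 *\<^sub>R J p u + b\<^sup>2 *\<^sub>R J q u + (a * b) *\<^sub>R polar_J p q u"
  by (rule vector_eq_rdot[THEN iffD1])
    (simp add: J_inner polar_J_inner inner_add_left R_multilinear algebra_simps power2_eq_square)

lemma J_rotated_pair_sum:
  "J (a *\<^sub>R p + b *\<^sub>R q) u + J ((- b) *\<^sub>R p + a *\<^sub>R q) u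
    = (a\<^sup>2 + b\<^sup>2) *\<^sub>R (J p u + J q u)"
  by (simp only: J_linear_combination) (simp add: algebra_simps)

end

section \<open>Jacobi-Tsankov tensors\<close>

locale jacobi_tsankov_tensor = curvature_tensor +
  assumes jacobi_tsankov_R: "jacobi_tsankov R"
begin

lemma J_commute: "p \<bullet> q = 0 \<Longrightarrow> J p (J q u) = J q (J p u)"
  using jacobi_tsankov_R unfolding jacobi_tsankov_def by (metis comp_apply)

lemma polar_J_commute_sum:
  assumes "p \<bullet> q = 0" "norm p = norm q"
  shows "polar_J p q (J p u + J q u) = J p (polar_J p q u) + J q (polar_J p q u)"
proof -
  have "(p + q) \<bullet> (p - q) = 0"
    using assms
    by (simp add: inner_add_left inner_diff_right inner_commute[of q p] dot_square_norm)
  from J_commute[OF this, of u]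
  have "2 *\<^sub>R polar_J p q (J p u + J q u) = 2 *\<^sub>R (J p (polar_J p q u) + J q (polar_J p q u))"
    by (simp add: J_add_polar J_diff_polar J_linear polar_J_linear scaleR_2 algebra_simps)
  then show ?thesis by (simp only: scaleR_cancel_left) simp
qed

lemma polar_J_commute:
  assumes "q \<bullet> p = 0" "q \<bullet> z = 0"
  shows "polar_J p z (J q u) = J q (polar_J p z u)"
proof -
  have "(p + z) \<bullet> q = 0" "(p - z) \<bullet> q = 0"
    using assms by (simp_all add: inner_add_left inner_diff_left inner_commute[of q])
  from arg_cong2[OF J_commute[OF this(1)] J_commute[OF this(2)], of "(-)" u u]
  have "2 *\<^sub>R polar_J p z (J q u) = 2 *\<^sub>R J q (polar_J p z u)"
    by (simp add: J_add_polar J_diff_polar J_linear polar_J_linear scaleR_2 algebra_simps)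
  then show ?thesis by (simp only: scaleR_cancel_left) simp
qed

lemma norm_J_swap:
  assumes "p \<bullet> q = 0" "norm p = norm q"
  shows "norm (J p q) = norm (J q p)"
proof -
  have "- (J p q \<bullet> J p q) = polar_J p q (J p q) \<bullet> p"
    by (simp add: polar_J_selfadjoint polar_J_first)
  also have "\<dots> = (J p (polar_J p q q) + J q (polar_J p q q)) \<bullet> p"
    using polar_J_commute_sum[OF assms, of q] by (simp add: J_self)
  also have "\<dots> = - (J q p \<bullet> J q p)"
    by (simp add: inner_add_left J_selfadjoint[of _ _ p] J_self polar_J_second)
  finally show ?thesis by (simp add: norm_eq_sqrt_inner)
qed

lemma J_swap_eigen:
  assumes "norm p = 1" "norm q = 1" "p \<bullet> q = 0" "J p q = l *\<^sub>R q"
  shows "J q p = l *\<^sub>R p"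
proof -
  have unit: "p \<bullet> p = 1" "q \<bullet> q = 1" using assms(1,2) by (simp_all add: norm_eq_1)
  have "norm (J q p) = \<bar>l\<bar>" using norm_J_swap[OF assms(3)] assms(1,2,4) by simp
  then have "J q p \<bullet> J q p = l\<^sup>2" by (simp add: power2_norm_eq_inner[symmetric])
  moreover have "J q p \<bullet> p = J p q \<bullet> q"
    by (simp add: J_inner R_pair_sym[of p q q p])
  then have "J q p \<bullet> p = l" using assms(4) unit by simp
  ultimately have "(J q p - l *\<^sub>R p) \<bullet> (J q p - l *\<^sub>R p) = 0"
    using unit by (simp add: inner_diff_left inner_diff_right inner_commute power2_eq_square)
  then show ?thesis by simp
qed

lemma J_eigen_transfer:
  assumes "norm p = 1" "norm q = 1" "p \<bullet> q = 0" "q \<bullet> z = 0"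
    and "J p q = l *\<^sub>R q" "J p z = m *\<^sub>R z" "m \<noteq> 0"
  shows "J q z = l *\<^sub>R z"
proof -
  have "polar_J p z (J q p) = J q (polar_J p z p)"
    using polar_J_commute assms(3,4) by (simp add: inner_commute)
  then have "m *\<^sub>R J q z = m *\<^sub>R (l *\<^sub>R z)"
    using J_swap_eigen[OF assms(1-3,5)] assms(6)
    by (simp add: polar_J_linear polar_J_first J_linear mult.commute)
  then show ?thesis using assms(7) by (simp only: scaleR_cancel_left) simp
qed

lemma J_nonzero_eigenvalue_unique:
  assumes "norm p = 1" "J p q = l *\<^sub>R q" "J p z = m *\<^sub>R z"
    and "q \<noteq> 0" "z \<noteq> 0" "l \<noteq> 0" "m \<noteq> 0"
  shows "l = m"
proof (rule ccontr)
  assume "l \<noteq> m"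
  have "l * (q \<bullet> z) = m * (q \<bullet> z)" using assms(2,3) J_selfadjoint[of p q z] by simp
  then have "q \<bullet> z = 0" using \<open>l \<noteq> m\<close> by simp
  define q' where "q' = (1 / norm q) *\<^sub>R q"
  define z' where "z' = (1 / norm z) *\<^sub>R z"
  have unit: "norm q' = 1" "norm z' = 1" using assms(4,5) by (simp_all add: q'_def z'_def)
  have eig: "J p q' = l *\<^sub>R q'" "J p z' = m *\<^sub>R z'"
    using assms(2,3) by (simp_all add: q'_def z'_def J_linear)
  have orth: "p \<bullet> q' = 0" "p \<bullet> z' = 0" "q' \<bullet> z' = 0" "z' \<bullet> q' = 0"
    using J_eigenvector_orthogonal[OF eig(1)] J_eigenvector_orthogonal[OF eig(2)] assms(6,7)
      \<open>q \<bullet> z = 0\<close>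
    by (simp_all add: q'_def z'_def inner_commute)
  have "J q' z' = l *\<^sub>R z'" by (rule J_eigen_transfer[OF assms(1) unit(1) orth(1,3) eig assms(7)])
  then have "J z' q' = l *\<^sub>R q'" by (rule J_swap_eigen[OF unit orth(3)])
  moreover have "J z' q' = m *\<^sub>R q'"
    by (rule J_eigen_transfer[OF assms(1) unit(2) orth(2,4) eig(2,1) assms(6)])
  ultimately show False using \<open>l \<noteq> m\<close> unit by auto
qed

lemma J_square_scaled:
  assumes "norm p = 1"
  obtains c where "\<And>u. J p (J p u) = c *\<^sub>R J p u"
proof (cases "\<forall>u. J p u = 0")
  case True
  then show ?thesis using that[of 0] by simp
next
  case False
  then obtain u0 where "J p u0 \<noteq> 0" by blast
  then obtain v c where v: "v \<noteq> 0" "c \<noteq> 0" "J p v = c *\<^sub>R v"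
    by (rule selfadjoint_has_nonzero_eigenvalue[OF linear_J J_selfadjoint])
  define K where "K u = J p (J p u) - c *\<^sub>R J p u" for u
  have K_linear: "linear K"
    unfolding K_def by (rule linearI) (simp_all add: J_linear algebra_simps)
  have K_selfadjoint: "K u \<bullet> v = u \<bullet> K v" for u v
    by (simp add: K_def inner_diff_left inner_diff_right
        J_selfadjoint[of p _ v] J_selfadjoint[of p u])
  have "K u = 0" for u
  proof (rule ccontr)
    assume "K u \<noteq> 0"
    have "subspace (range K)" by (rule linear_subspace_image[OF K_linear subspace_UNIV])
    moreover have "J p y \<in> range K" if "y \<in> range K" for y
    proof -
      from that obtain y' where "y = K y'" by blast
      then have "J p y = K (J p y')" by (simp add: K_def J_linear)
      then show ?thesis by simp
    qed
    ultimately obtain v' m where v': "v' \<in> range K" "v' \<noteq> 0" "J p v' = m *\<^sub>R v'"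
      by (rule selfadjoint_invariant_subspace_has_eigenvector[OF linear_J J_selfadjoint _ _
            rangeI[of K u] \<open>K u \<noteq> 0\<close>])
    have "m = 0 \<or> m = c"
      using J_nonzero_eigenvalue_unique[OF assms v(3) v'(3) v(1) v'(2) v(2)] by blast
    then have "K v' = 0" using v'(3) by (auto simp: K_def J_linear)
    then show False using selfadjoint_kernel_range_eq_0[OF K_selfadjoint v'(1)] v'(2) by simp
  qed
  then show ?thesis using that[of c] by (simp add: K_def)
qed

lemma J_square_eq_eigenvalue:
  assumes "norm q = 1" "J q v = l *\<^sub>R v" "v \<noteq> 0" "l \<noteq> 0"
  shows "J q (J q u) = l *\<^sub>R J q u"
proof -
  obtain c where c: "\<And>u. J q (J q u) = c *\<^sub>R J q u" using J_square_scaled[OF assms(1)] by blast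
  have "(c * l) *\<^sub>R v = (l * l) *\<^sub>R v" using c[of v] assms(2) by (auto simp: J_linear)
  then have "c = l" using assms(3,4) by auto
  then show ?thesis using c by simp
qed

lemma Wsp_unit_decomposition:
  assumes "norm x = 1" "J x e0 = l *\<^sub>R e0" "e0 \<noteq> 0" "l \<noteq> 0"
    and "w \<in> Wsp R x" "norm w = 1"
  obtains a b e
  where "norm e = 1" "J x e = l *\<^sub>R e" "w = a *\<^sub>R x + b *\<^sub>R e" "a\<^sup>2 + b\<^sup>2 = 1"
proof -
  have span_range: "span (range (J x)) = range (J x)"
    by (simp add: linear_subspace_image[OF linear_J subspace_UNIV])
  obtain t where "w - t *\<^sub>R x \<in> range (J x)"
    using assms(5) by (auto simp: Wsp_def span_insert span_range)
  define q where "q = w - t *\<^sub>R x"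
  have Jq: "J x q = l *\<^sub>R q"
    using \<open>w - t *\<^sub>R x \<in> range (J x)\<close> J_square_eq_eigenvalue[OF assms(1-4)]
    by (auto simp: q_def)
  have "q \<bullet> x = 0" by (rule J_eigenvector_orthogonal[OF Jq assms(4)])
  have "w \<bullet> w = t\<^sup>2 * (x \<bullet> x) + 2 * t * (q \<bullet> x) + q \<bullet> q"
    unfolding q_def
    by (simp add: inner_diff_left inner_diff_right inner_commute power2_eq_square algebra_simps)
  then have "t\<^sup>2 + (norm q)\<^sup>2 = 1"
    using \<open>q \<bullet> x = 0\<close> assms(1,6) by (simp add: norm_eq_1 power2_norm_eq_inner)
  show ?thesis
  proof (cases "q = 0")
    case True
    show ?thesis
      by (rule that[of "(1 / norm e0) *\<^sub>R e0" t 0])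
        (use True assms(2,3) \<open>t\<^sup>2 + (norm q)\<^sup>2 = 1\<close> in \<open>auto simp: q_def J_linear\<close>)
  next
    case False
    show ?thesis
      by (rule that[of "(1 / norm q) *\<^sub>R q" t "norm q"])
        (use False Jq \<open>t\<^sup>2 + (norm q)\<^sup>2 = 1\<close> in \<open>auto simp: q_def J_linear\<close>)
  qed
qed

end

section \<open>The Jacobi operators on \<open>W(x)\<close>\<close>

locale jacobi_frame = jacobi_tsankov_tensor +
  fixes x e :: 'a and l :: real
  assumes norm_x: "norm x = 1" and norm_e: "norm e = 1"
    and J_x_e: "J x e = l *\<^sub>R e" and eigenvalue_nonzero: "l \<noteq> 0"
begin

lemma orthonormal: "x \<bullet> x = 1" "e \<bullet> e = 1" "x \<bullet> e = 0" "e \<bullet> x = 0"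
  using norm_x norm_e J_eigenvector_orthogonal[OF J_x_e eigenvalue_nonzero]
  by (simp_all add: norm_eq_1 inner_commute)

lemma nonzero: "x \<noteq> 0" "e \<noteq> 0"
  using norm_x norm_e by auto

lemma J_x_square: "J x (J x u) = l *\<^sub>R J x u"
  by (rule J_square_eq_eigenvalue[OF norm_x J_x_e nonzero(2) eigenvalue_nonzero])

lemma J_e_x: "J e x = l *\<^sub>R x"
  by (rule J_swap_eigen[OF norm_x norm_e orthonormal(3) J_x_e])

lemma J_e_square: "J e (J e u) = l *\<^sub>R J e u"
  by (rule J_square_eq_eigenvalue[OF norm_e J_e_x nonzero(1) eigenvalue_nonzero])

lemma J_e_eigen: "J x q = l *\<^sub>R q \<Longrightarrow> e \<bullet> q = 0 \<Longrightarrow> J e q = l *\<^sub>R q"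
  using J_eigen_transfer[OF norm_x norm_e orthonormal(3) _ J_x_e _ eigenvalue_nonzero] by blast

lemma J_e_kernel:
  assumes "J x k = 0" "k \<bullet> x = 0"
  shows "J e k = 0"
proof -
  define y where "y = J e k"
  have J_e_y: "J e y = l *\<^sub>R y" by (simp add: y_def J_e_square)
  have "x \<bullet> y = 0"
    using J_selfadjoint[of e k x] assms(2) by (simp add: y_def J_e_x inner_commute)
  then have "J x y = l *\<^sub>R y"
    by (rule J_eigen_transfer[OF norm_e norm_x orthonormal(4) _ J_e_x J_e_y eigenvalue_nonzero])
  then have "k \<bullet> y = 0"
    using J_selfadjoint[of x k y] assms(1) eigenvalue_nonzero by simp
  then have "y \<bullet> y = 0"
    using J_selfadjoint[of e k y] J_e_y by (simp add: y_def)
  then show ?thesis by (simp add: y_def)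
qed

lemma norm_rotated:
  assumes "a\<^sup>2 + b\<^sup>2 = 1"
  shows "norm (a *\<^sub>R x + b *\<^sub>R e) = 1"
  using assms orthonormal
  by (simp add: norm_eq_1 inner_add_left inner_add_right power2_eq_square)

lemma J_rotated_partner:
  assumes "a\<^sup>2 + b\<^sup>2 = 1"
  shows "J (a *\<^sub>R x + b *\<^sub>R e) ((- b) *\<^sub>R x + a *\<^sub>R e) = l *\<^sub>R ((- b) *\<^sub>R x + a *\<^sub>R e)"
proof -
  let ?w' = "(- b) *\<^sub>R x + a *\<^sub>R e"
  have "J (a *\<^sub>R x + b *\<^sub>R e) ?w' + J ?w' ?w' = J x ?w' + J e ?w'"
    using J_rotated_pair_sum[of a x b e ?w'] assms by simp
  also have "\<dots> = l *\<^sub>R ?w'"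
    by (simp add: J_linear J_self J_x_e J_e_x algebra_simps)
  finally show ?thesis by (simp add: J_self)
qed

lemma J_rotated_square:
  assumes "a\<^sup>2 + b\<^sup>2 = 1"
  shows "J (a *\<^sub>R x + b *\<^sub>R e) (J (a *\<^sub>R x + b *\<^sub>R e) u) = l *\<^sub>R J (a *\<^sub>R x + b *\<^sub>R e) u"
proof (rule J_square_eq_eigenvalue[OF norm_rotated[OF assms] J_rotated_partner[OF assms] _
      eigenvalue_nonzero])
  show "(- b) *\<^sub>R x + a *\<^sub>R e \<noteq> 0"
    using norm_rotated[of "- b" a] assms by (auto simp: add.commute)
qed

lemma J_rotated_orthogonal:
  assumes "a\<^sup>2 + b\<^sup>2 = 1" "z \<bullet> x = 0" "z \<bullet> e = 0"
  shows "J (a *\<^sub>R x + b *\<^sub>R e) z = J x z"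
proof -
  let ?P = "J (a *\<^sub>R x + b *\<^sub>R e)" and ?Q = "J ((- b) *\<^sub>R x + a *\<^sub>R e)"
  have sum: "?P u + ?Q u = J x u + J e u" for u
    using J_rotated_pair_sum[of a x b e u] assms(1) by simp
  have P_square: "?P (?P u) = l *\<^sub>R ?P u" and Q_square: "?Q (?Q u) = l *\<^sub>R ?Q u" for u
    using J_rotated_square[of a b] J_rotated_square[of "- b" a] assms(1)
    by (simp_all add: add.commute)
  note scaled_projections = J_selfadjoint P_square J_selfadjoint Q_square
  define q where "q = (1 / l) *\<^sub>R J x z"
  have J_x_q: "J x q = l *\<^sub>R q" by (simp add: q_def J_linear J_x_square)
  have "J x (z - q) = 0" using eigenvalue_nonzero by (simp add: J_linear J_x_square q_def)
  moreover have "(z - q) \<bullet> x = 0"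
    using J_selfadjoint[of x z x] assms(2) by (simp add: q_def inner_diff_left J_self)
  ultimately have "?P (z - q) = 0"
    using scaled_projection_sum_eq_0[OF scaled_projections] sum J_e_kernel by simp
  moreover have "e \<bullet> q = 0"
    using J_selfadjoint[of x z e] assms(3) by (simp add: q_def J_x_e inner_commute)
  then have "?P q = l *\<^sub>R q"
    using scaled_projection_sum_eq_double[OF scaled_projections] sum J_e_eigen J_x_q
    by (simp add: scaleR_2[symmetric] algebra_simps)
  ultimately show ?thesis using eigenvalue_nonzero by (simp add: J_linear q_def)
qed

lemma J_rotated_intertwines:
  assumes "a\<^sup>2 + b\<^sup>2 = 1"
  shows "J (a *\<^sub>R x + b *\<^sub>R e) (plane_rotation x e a b u) = plane_rotation x e a b (J x u)"
proof -
  define w w' where "w = a *\<^sub>R x + b *\<^sub>R e" and "w' = (- b) *\<^sub>R x + a *\<^sub>R e"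
  let ?T = "plane_rotation x e a b"
  define z where "z = u - (u \<bullet> x) *\<^sub>R x - (u \<bullet> e) *\<^sub>R e"
  have u: "u = z + (u \<bullet> x) *\<^sub>R x + (u \<bullet> e) *\<^sub>R e" by (simp add: z_def)
  have z: "z \<bullet> x = 0" "z \<bullet> e = 0"
    using orthonormal by (simp_all add: z_def inner_diff_left)
  have J_x_z: "J x z \<bullet> x = 0" "J x z \<bullet> e = 0"
    using J_selfadjoint[of x z x] J_selfadjoint[of x z e] z by (simp_all add: J_self J_x_e)
  note T_linear = linear_add[OF linear_plane_rotation] linear_scale[OF linear_plane_rotation]
  note T_basis = plane_rotation_first[OF orthonormal(1-3), where a = a and b = b, folded w_def]
    plane_rotation_second[OF orthonormal(1-3), where a = a and b = b, folded w'_def]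
  have "?T u = z + (u \<bullet> x) *\<^sub>R w + (u \<bullet> e) *\<^sub>R w'"
    by (subst u) (simp only: T_linear T_basis plane_rotation_orthogonal[OF z])
  then have "J w (?T u) = J x z + ((u \<bullet> e) * l) *\<^sub>R w'"
    using J_rotated_orthogonal[OF assms z, folded w_def]
      J_rotated_partner[OF assms, folded w_def w'_def]
    by (simp add: J_linear J_self)
  moreover have "J x u = J x z + ((u \<bullet> e) * l) *\<^sub>R e"
    by (subst u) (simp add: J_linear J_self J_x_e)
  then have "?T (J x u) = J x z + ((u \<bullet> e) * l) *\<^sub>R w'"
    by (simp only: T_linear T_basis plane_rotation_orthogonal[OF J_x_z])
  ultimately show ?thesis by (simp add: w_def)
qed

lemma e_in_Wsp: "e \<in> Wsp R x"
proof -
  have "e = J x ((1 / l) *\<^sub>R e)" using eigenvalue_nonzero by (simp add: J_linear J_x_e)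
  then show ?thesis using range_jacobi_op_subset_Wsp by (metis rangeI subsetD)
qed

lemma range_J_rotated_subset_Wsp:
  assumes "a\<^sup>2 + b\<^sup>2 = 1"
  shows "range (J (a *\<^sub>R x + b *\<^sub>R e)) \<subseteq> Wsp R x"
proof
  fix y assume "y \<in> range (J (a *\<^sub>R x + b *\<^sub>R e))"
  then obtain u where "y = J (a *\<^sub>R x + b *\<^sub>R e) (plane_rotation x e a b u)"
    using bij_plane_rotation[OF orthonormal(1-3) assms] by (metis bij_pointE rangeE)
  then have "y = plane_rotation x e a b (J x u)" by (simp add: J_rotated_intertwines[OF assms])
  then show "y \<in> Wsp R x"
    using plane_rotation_in_subspace[OF subspace_Wsp base_in_Wsp e_in_Wsp]
      range_jacobi_op_subset_Wsp
    by blast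
qed

lemma J_rotated_vanishes_on_Wsp_orthogonal:
  assumes "a\<^sup>2 + b\<^sup>2 = 1" and v: "\<forall>u\<in>Wsp R x. u \<bullet> v = 0"
  shows "J (a *\<^sub>R x + b *\<^sub>R e) v = 0"
proof -
  have J_x_v: "J x v \<in> Wsp R x" "J x (J x v) \<in> Wsp R x"
    using range_jacobi_op_subset_Wsp by blast+
  have "J x v \<bullet> J x v = J x (J x v) \<bullet> v" by (simp add: J_selfadjoint)
  then have "J x v = 0" using v J_x_v by simp
  moreover have "plane_rotation x e a b v = v"
    using v base_in_Wsp[of x R] e_in_Wsp
    by (intro plane_rotation_orthogonal) (auto simp: inner_commute)
  ultimately show ?thesis
    using J_rotated_intertwines[OF assms(1), of v] linear_0[OF linear_plane_rotation] by simp
qed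

lemma similar_J_rotated:
  assumes "a\<^sup>2 + b\<^sup>2 = 1"
  shows "similar_op (J (a *\<^sub>R x + b *\<^sub>R e)) (J x)"
  unfolding similar_op_def
  using linear_plane_rotation bij_plane_rotation[OF orthonormal(1-3) assms]
    J_rotated_intertwines[OF assms]
  by (intro exI[of _ "plane_rotation x e a b"]) auto

lemma eigenvalues_J_x: "eigenvalues_op (J x) = {0, l}"
proof (intro set_eqI iffI)
  fix c assume "c \<in> eigenvalues_op (J x)"
  then obtain v where "v \<noteq> 0" "J x v = c *\<^sub>R v" by (auto simp: eigenvalues_op_def)
  then show "c \<in> {0, l}"
    using J_nonzero_eigenvalue_unique[OF norm_x J_x_e _ nonzero(2) _ eigenvalue_nonzero] by blast
next
  fix c assume "c \<in> {0, l}"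
  then show "c \<in> eigenvalues_op (J x)"
    using nonzero J_self J_x_e by (auto simp: eigenvalues_op_def)
qed

end

theorem lemma2p3:
  fixes R :: "'a::euclidean_space \<Rightarrow> 'a \<Rightarrow> 'a \<Rightarrow> 'a \<Rightarrow> real"
    and x w :: 'a
  assumes "DIM('a) \<ge> 3"
    and "alg_curv_tensor R"
    and "\<exists>a b c d. R a b c d \<noteq> 0"
    and "jacobi_tsankov R"
    and "\<forall>y. jrank R y < DIM('a) - 1"
    and "norm x = 1"
    and "jrank R x \<noteq> 0"
    and "w \<in> Wsp R x" and "norm w = 1"
  shows "range (jacobi_op R w) \<subseteq> Wsp R x
     \<and> (\<forall>v. (\<forall>u\<in>Wsp R x. u \<bullet> v = 0) \<longrightarrow> jacobi_op R w v = 0)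
     \<and> similar_op (jacobi_op R w) (jacobi_op R x)
     \<and> card (eigenvalues_op (jacobi_op R x)) = 2"
proof -
  interpret jacobi_tsankov_tensor R using assms(2,4) by unfold_locales
  obtain u where "J x u \<noteq> 0"
    using assms(7) dim_eq_0[of "range (J x)"] by (auto simp: jrank_def)
  then obtain e0 l where "e0 \<noteq> 0" "l \<noteq> 0" "J x e0 = l *\<^sub>R e0"
    by (rule selfadjoint_has_nonzero_eigenvalue[OF linear_J J_selfadjoint])
  then obtain a b e where e: "norm e = 1" "J x e = l *\<^sub>R e"
    and w: "w = a *\<^sub>R x + b *\<^sub>R e" and ab: "a\<^sup>2 + b\<^sup>2 = 1"
    using Wsp_unit_decomposition[OF assms(6) _ _ _ assms(8,9)] by metis
  interpret jacobi_frame R x e l using assms(2,4,6) e \<open>l \<noteq> 0\<close> by unfold_locales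
  show ?thesis
    using range_J_rotated_subset_Wsp[OF ab] J_rotated_vanishes_on_Wsp_orthogonal[OF ab]
      similar_J_rotated[OF ab] eigenvalues_J_x \<open>l \<noteq> 0\<close>
    unfolding w by simp
qed

end
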